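(* Let $n\geq 2$ and $m \geq 2$ be integers, let $\mathcal{W}$ be a vector space over a field $\mathbb{F}$ with $\operatorname{Char}(\mathbb{F})=0$ or $\operatorname{Char}(\mathbb{F})>m$, let $\{v_a : a \in [n]\}$ be a multiset of non-zero vectors in $\mathcal{W}$ with $\operatorname{k-rank}(v_a : a \in [n]) \geq 2$, let $\{\alpha_a : a \in [n]\} \subseteq \mathbb{F}^\times$ be a multiset of non-zero scalars, and let $d=\dim\operatorname{span}\{v_a : a \in [n]\}$. If $2n+1 \leq m+2d-2$, then $\sum_{a \in [n]} \alpha_a v_a^{\otimes m}$ constitutes a unique Waring rank decomposition. More generally, if $n +r +1\leq m+2d-2$ for some integer $r \geq n$, then $\sum_{a \in [n]} \alpha_a v_a^{\otimes m}$ is the unique symmetric decomposition of this tensor into at most $r$ terms.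
   Context: $[n]=\{1,\dots,n\}$. The Kruskal rank $\operatorname{k-rank}$ of a multiset of vectors is the largest $k$ such that every sub-multiset of size $k$ is linearly independent. For $v=\sum_{a\in[n]}\alpha_a v_a^{\otimes m}$ and an integer $\tilde n\ge n$: this symmetric decomposition is the unique symmetric decomposition of $v$ into at most $\tilde n$ terms if for every non-negative integer $r'\le\tilde n$, every multiset of non-zero vectors $\{u_a:a\in[r']\}\subseteq\mathcal{W}$ and non-zero scalars $\{\beta_a:a\in[r']\}$ with $v=\sum_{a\in[r']}\beta_a u_a^{\otimes m}$, either $\operatorname{k-rank}(u_a:a\in[r'])=1$, or $r'=n$ and $\{\alpha_a v_a^{\otimes m}:a\in[n]\}=\{\beta_a u_a^{\otimes m}:a\in[n]\}$ as multisets. It constitutes a unique Waring rank decomposition if for every non-negative integer $r'\le n$, non-zero vectors $\{u_a:a\in[r']\}$ and non-zero scalars $\{\beta_a\}$ with $v=\sum_{a\in[r']}\beta_a u_a^{\otimes m}$, it holds that $r'=n$ and $\{\alpha_a v_a^{\otimes m}\}=\{\beta_a u_a^{\otimes m}\}$ as multisets. *)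

theory Defs
  imports Complex_Main "HOL-Library.Multiset" "HOL-Library.Function_Algebras"
begin

text \<open>Coordinate model of a vector space over a field 'f: vectors are functions
  'i => 'f (i.e. elements of F^I), with pointwise operations; W is a subspace.\<close>

definition vscale :: "'f::field \<Rightarrow> ('i \<Rightarrow> 'f) \<Rightarrow> ('i \<Rightarrow> 'f)" where
  "vscale c x = (\<lambda>j. c * x j)"

definition lin_indep_fam :: "(nat \<Rightarrow> ('i \<Rightarrow> 'f::field)) \<Rightarrow> nat set \<Rightarrow> bool" where
  "lin_indep_fam u S \<longleftrightarrow>
     (\<forall>c. (\<Sum>a\<in>S. vscale (c a) (u a)) = 0 \<longrightarrow> (\<forall>a\<in>S. c a = 0))"

definition krank :: "(nat \<Rightarrow> ('i \<Rightarrow> 'f::field)) \<Rightarrow> nat \<Rightarrow> nat" where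
  "krank u r = (GREATEST k. k \<le> r \<and>
     (\<forall>S. S \<subseteq> {1..r} \<and> card S = k \<longrightarrow> lin_indep_fam u S))"

text \<open>The symmetric tensor c * x^{(tensor m)} in coordinates: its entry at the
  multi-index (js 0, ..., js (m-1)) is c * x(js 0) * ... * x(js (m-1)).\<close>
definition sym_tensor :: "nat \<Rightarrow> 'f::field \<Rightarrow> ('i \<Rightarrow> 'f) \<Rightarrow> ((nat \<Rightarrow> 'i) \<Rightarrow> 'f)" where
  "sym_tensor m c x = (\<lambda>js. c * (\<Prod>k<m. x (js k)))"

definition tensor_sum :: "nat \<Rightarrow> nat \<Rightarrow> (nat \<Rightarrow> 'f::field) \<Rightarrow> (nat \<Rightarrow> ('i \<Rightarrow> 'f))
    \<Rightarrow> ((nat \<Rightarrow> 'i) \<Rightarrow> 'f)" where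
  "tensor_sum m r \<beta> u = (\<Sum>a\<in>{1..r}. sym_tensor m (\<beta> a) (u a))"

definition term_mset :: "nat \<Rightarrow> nat \<Rightarrow> (nat \<Rightarrow> 'f::field) \<Rightarrow> (nat \<Rightarrow> ('i \<Rightarrow> 'f))
    \<Rightarrow> ((nat \<Rightarrow> 'i) \<Rightarrow> 'f) multiset" where
  "term_mset m r \<beta> u = image_mset (\<lambda>a. sym_tensor m (\<beta> a) (u a)) (mset_set {1..r})"

definition unique_sym_decomp ::
  "('i \<Rightarrow> 'f::field) set \<Rightarrow> nat \<Rightarrow> nat \<Rightarrow> (nat \<Rightarrow> 'f) \<Rightarrow> (nat \<Rightarrow> ('i \<Rightarrow> 'f)) \<Rightarrow> nat \<Rightarrow> bool" where
  "unique_sym_decomp W m n \<alpha> v rt \<longleftrightarrow>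
     (\<forall>r' u \<beta>. r' \<le> rt \<and> (\<forall>a\<in>{1..r'}. u a \<in> W \<and> u a \<noteq> 0 \<and> \<beta> a \<noteq> 0)
        \<and> tensor_sum m n \<alpha> v = tensor_sum m r' \<beta> u
      \<longrightarrow> krank u r' = 1 \<or> (r' = n \<and> term_mset m n \<alpha> v = term_mset m r' \<beta> u))"

definition unique_waring_decomp ::
  "('i \<Rightarrow> 'f::field) set \<Rightarrow> nat \<Rightarrow> nat \<Rightarrow> (nat \<Rightarrow> 'f) \<Rightarrow> (nat \<Rightarrow> ('i \<Rightarrow> 'f)) \<Rightarrow> bool" where
  "unique_waring_decomp W m n \<alpha> v \<longleftrightarrow>
     (\<forall>r' u \<beta>. r' \<le> n \<and> (\<forall>a\<in>{1..r'}. u a \<in> W \<and> u a \<noteq> 0 \<and> \<beta> a \<noteq> 0)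
        \<and> tensor_sum m n \<alpha> v = tensor_sum m r' \<beta> u
      \<longrightarrow> r' = n \<and> term_mset m n \<alpha> v = term_mset m r' \<beta> u)"

end

theory Submission
  imports Defs "HOL-Library.Disjoint_Sets"
begin

(* Suppose \<Sum>i. c i * w i^{\<otimes>m} = 0 and there are m linear functionals, all non-zero at p, such
   that every w i not parallel to p lies in the kernel of one of them. Contracting the k-th
   tensor slot with the k-th functional kills every term not parallel to p; the remaining terms
   are multiples of p^{\<otimes>m}, so their sum is zero. Such functionals are cheap: a hyperplane
   avoiding p can be chosen to contain dim (span (insert p X)) - 1 vectors of a finite set X,
   and every other vector of X costs one functional.

   Apply this to the difference of two decompositions \<Sum>a. \<alpha> a * v a^{\<otimes>m} and
   \<Sum>b. \<beta> b * u b^{\<otimes>m} with n and r terms. Contracting all slots but one first shows that each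
   v a lies in the span of the u b, so the u b span at least d dimensions as well. With one
   hyperplane for the v's and one for the u's, at most n + r + 3 - 2d \<le> m functionals are
   needed. Hence the terms in every class of parallel vectors sum to zero. Each v a has a class
   of its own, and counting (r \<le> n) or pairwise independence of the u b (Kruskal rank at least 2)
   forces that class to contain exactly one u b, carrying the same term, and every u b to occur.

   Tensors are arrays over all multi-indices. *)

lemma vscale_apply: "vscale c x j = c * x j"
  by (simp add: vscale_def)

lemma sum_apply: "(\<Sum>i\<in>I. f i) x = (\<Sum>i\<in>I. f i x)"
  by (induction I rule: infinite_finite_induct) auto

interpretation V: vector_space vscale
  by unfold_locales (auto simp: vscale_apply fun_eq_iff algebra_simps)

abbreviation lin_functional :: "(('i \<Rightarrow> 'f::field) \<Rightarrow> 'f) \<Rightarrow> bool" where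
  "lin_functional f \<equiv> module_hom vscale (*) f"

lemma lin_functional_coordinate: "lin_functional (\<lambda>x. x j)"
  by unfold_locales (auto simp: vscale_apply algebra_simps)

lemma dim_le_dim_of_subset_span:
  assumes "S \<subseteq> V.span T" "finite T"
  shows "V.dim S \<le> V.dim T"
proof -
  obtain B where B: "B \<subseteq> T" "T \<subseteq> V.span B" "card B = V.dim T"
    using V.basis_exists by metis
  have "S \<subseteq> V.span B"
    using assms(1) V.span_minimal[OF B(2) V.subspace_span] by blast
  then show ?thesis
    using V.dim_le_card B(1,3) assms(2) finite_subset by metis
qed

lemma card_filter_partition_less:
  assumes "finite I" "J \<subseteq> I" "i0 \<in> I" "\<not> P i0"
  shows "card {i\<in>J. P i} + card {i\<in>I - J. P i} < card I"
proof -
  have "finite J"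
    using assms(1,2) finite_subset by blast
  then have "card {i\<in>J. P i} + card {i\<in>I - J. P i} = card ({i\<in>J. P i} \<union> {i\<in>I - J. P i})"
    using assms(1) by (intro card_Un_disjoint[symmetric]) auto
  also have "\<dots> < card I"
    using assms by (intro psubset_card_mono) auto
  finally show ?thesis .
qed

section \<open>Parallel vectors and separating functionals\<close>

definition parallel :: "('i \<Rightarrow> 'f::field) \<Rightarrow> ('i \<Rightarrow> 'f) \<Rightarrow> bool" where
  "parallel x y \<longleftrightarrow> (\<exists>t. x = vscale t y)"

lemma parallel_refl: "parallel x x"
  unfolding parallel_def by (rule exI[of _ 1]) (simp add: vscale_apply fun_eq_iff)

lemma parallel_sym: "x \<noteq> 0 \<Longrightarrow> parallel x y \<Longrightarrow> parallel y x"
  unfolding parallel_def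
  by (metis V.scale_eq_0_iff V.scale_one V.scale_scale field_class.field_inverse)

lemma parallel_trans: "parallel x y \<Longrightarrow> parallel y z \<Longrightarrow> parallel x z"
  unfolding parallel_def by (metis V.scale_scale)

lemma parallel_in_span: "parallel x p \<Longrightarrow> x \<in> V.span (insert p X)"
  unfolding parallel_def by (metis V.span_base V.span_scale insertI1)

lemma subset_span_insert_nonparallel: "Y \<subseteq> V.span (insert p {y\<in>Y. \<not> parallel y p})"
proof
  fix y assume "y \<in> Y"
  then show "y \<in> V.span (insert p {y\<in>Y. \<not> parallel y p})"
    by (cases "parallel y p") (auto intro: parallel_in_span V.span_base)
qed

lemma exists_functional_separating:
  fixes p :: "'i \<Rightarrow> 'f::field"
  assumes "p \<notin> V.span B"
  obtains f where "lin_functional f" "f p = 1" "\<forall>y\<in>B. f y = 0"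
proof -
  have pair: "vector_space_pair vscale ((*) :: 'f \<Rightarrow> 'f \<Rightarrow> 'f)"
    by unfold_locales (auto simp: vscale_apply fun_eq_iff algebra_simps)
  obtain C where C: "C \<subseteq> B" "V.independent C" "B \<subseteq> V.span C"
    using V.maximal_independent_subset by metis
  have pC: "p \<notin> V.span C"
    using assms V.span_mono[OF C(1)] by blast
  then have "V.independent (insert p C)"
    using C(2) by (rule V.independent_insertI)
  then obtain f where f: "lin_functional f" "\<forall>x\<in>insert p C. f x = (if x = p then 1 else 0)"
    using vector_space_pair.linear_independent_extend[OF pair, of _ "\<lambda>x. if x = p then 1 else 0"]
    unfolding module_hom_iff_linear by blast
  have "f x = 0" if "x \<in> C" for x
    using f(2) that pC V.span_base by fastforce
  then have "f y = 0" if "y \<in> B" for y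
    using module_hom.eq_0_on_span[OF f(1)] C(3) that by blast
  then show ?thesis
    using that f by simp
qed

lemma exists_functional_with_large_kernel:
  assumes "finite X" "p \<noteq> 0"
  obtains f where "lin_functional f" "f p \<noteq> 0" "V.dim (insert p X) \<le> card {x\<in>X. f x = 0} + 1"
proof -
  have "V.independent {p}"
    by (rule V.independent_insertI) (simp_all add: assms(2) V.span_empty V.independent_empty)
  then obtain B where B: "p \<in> B" "B \<subseteq> insert p X" "V.independent B" "insert p X \<subseteq> V.span B"
    using V.maximal_independent_subset_extend[of "{p}" "insert p X"] by auto
  have "p \<notin> V.span (B - {p})"
    using B(1,3) V.dependent_def by blast
  then obtain f where f: "lin_functional f" "f p = 1" "\<forall>y\<in>B - {p}. f y = 0"
    by (rule exists_functional_separating)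
  have fin: "finite B"
    using B(2) assms(1) finite_subset by blast
  have "V.dim (insert p X) = card (B - {p}) + 1"
    using V.basis_card_eq_dim[OF B(2,4,3)] card_Suc_Diff1[OF fin B(1)] by simp
  also have "card (B - {p}) \<le> card {x\<in>X. f x = 0}"
    using f(3) B(2) assms(1) by (intro card_mono) auto
  finally show ?thesis
    using that f(1,2) by simp
qed

section \<open>Functionals whose kernels cover a set of vectors\<close>

definition kernels_cover :: "nat \<Rightarrow> ('i \<Rightarrow> 'f::field) \<Rightarrow> ('i \<Rightarrow> 'f) set \<Rightarrow> bool" where
  "kernels_cover k p X \<longleftrightarrow>
     (\<exists>fs. (\<forall>j<k. lin_functional (fs j) \<and> fs j p \<noteq> 0) \<and> (\<forall>x\<in>X. \<exists>j<k. fs j x = 0))"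

lemma kernels_cover_subset: "kernels_cover k p Y \<Longrightarrow> X \<subseteq> Y \<Longrightarrow> kernels_cover k p X"
  unfolding kernels_cover_def by blast

lemma kernels_cover_empty: "kernels_cover 0 p {}"
  unfolding kernels_cover_def by simp

lemma kernels_cover_kernel:
  "lin_functional f \<Longrightarrow> f p \<noteq> 0 \<Longrightarrow> kernels_cover 1 p {x. f x = 0}"
  unfolding kernels_cover_def by (intro exI[of _ "\<lambda>_. f"]) auto

lemma kernels_cover_Un:
  assumes "kernels_cover k p X" "kernels_cover l p Y"
  shows "kernels_cover (k + l) p (X \<union> Y)"
proof -
  obtain fs where fs: "\<forall>j<k. lin_functional (fs j) \<and> fs j p \<noteq> 0" "\<forall>x\<in>X. \<exists>j<k. fs j x = 0"
    using assms(1) kernels_cover_def by blast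
  obtain gs where gs: "\<forall>j<l. lin_functional (gs j) \<and> gs j p \<noteq> 0" "\<forall>y\<in>Y. \<exists>j<l. gs j y = 0"
    using assms(2) kernels_cover_def by blast
  define hs where "hs j = (if j < k then fs j else gs (j - k))" for j
  have "\<forall>j<k + l. lin_functional (hs j) \<and> hs j p \<noteq> 0"
    using fs(1) gs(1) by (auto simp: hs_def)
  moreover have "\<exists>j<k + l. hs j x = 0" if "x \<in> X \<union> Y" for x
  proof (cases "x \<in> X")
    case True
    then obtain j where "j < k" "fs j x = 0" using fs(2) by blast
    then show ?thesis unfolding hs_def by auto
  next
    case False
    then have "x \<in> Y" using that by simp
    then obtain j where "j < l" "gs j x = 0" using gs(2) by blast
    then show ?thesis unfolding hs_def by (intro exI[of _ "k + j"]) auto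
  qed
  ultimately show ?thesis
    unfolding kernels_cover_def by (intro exI[of _ hs]) simp
qed

lemma kernels_cover_mono:
  assumes "kernels_cover k p X" "k \<le> l" "p \<noteq> 0"
  shows "kernels_cover l p X"
proof -
  obtain fs where fs: "\<forall>j<k. lin_functional (fs j) \<and> fs j p \<noteq> 0" "\<forall>x\<in>X. \<exists>j<k. fs j x = 0"
    using assms(1) kernels_cover_def by blast
  have "p \<notin> V.span {}"
    using assms(3) by (simp add: V.span_empty)
  then obtain f where f: "lin_functional f" "f p = 1"
    by (rule exists_functional_separating)
  define gs where "gs j = (if j < k then fs j else f)" for j
  have "\<forall>j<l. lin_functional (gs j) \<and> gs j p \<noteq> 0"
    using fs(1) f by (simp add: gs_def)
  moreover have "\<exists>j<l. gs j x = 0" if x: "x \<in> X" for x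
  proof -
    obtain j where "j < k" "fs j x = 0" using fs(2) x by blast
    then show ?thesis using assms(2) unfolding gs_def by (intro exI[of _ j]) simp
  qed
  ultimately show ?thesis
    unfolding kernels_cover_def by (intro exI[of _ gs]) simp
qed

lemma kernels_cover_singleton:
  assumes "p \<noteq> 0" "\<not> parallel x p"
  shows "kernels_cover 1 p {x}"
proof -
  have "p \<notin> V.span {x}"
  proof
    assume "p \<in> V.span {x}"
    then obtain t where "p = vscale t x"
      by (auto simp: V.span_singleton)
    then show False
      using assms parallel_sym parallel_def by metis
  qed
  then obtain f where "lin_functional f" "f p = 1" "f x = 0"
    by (metis exists_functional_separating singletonI)
  then show ?thesis
    using kernels_cover_kernel[of f p] kernels_cover_subset by fastforce
qed

lemma kernels_cover_card:
  assumes "finite X" "p \<noteq> 0" "\<forall>x\<in>X. \<not> parallel x p"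
  shows "kernels_cover (card X) p X"
  using assms(1,3)
proof (induction X rule: finite_induct)
  case empty
  show ?case by (simp add: kernels_cover_empty)
next
  case (insert x X)
  then have "kernels_cover (1 + card X) p ({x} \<union> X)"
    using kernels_cover_Un kernels_cover_singleton assms(2) by blast
  then show ?case
    using insert.hyps by simp
qed

lemma kernels_cover_nonparallel:
  assumes "finite X" "p \<noteq> 0" "\<forall>x\<in>X. \<not> parallel x p"
  obtains k where "kernels_cover k p X" "k + V.dim (insert p X) \<le> card X + 2"
proof -
  obtain f where f: "lin_functional f" "f p \<noteq> 0"
    and dim: "V.dim (insert p X) \<le> card {x\<in>X. f x = 0} + 1"
    by (rule exists_functional_with_large_kernel[OF assms(1,2)])
  let ?R = "{x\<in>X. f x \<noteq> 0}"
  have "kernels_cover (card ?R) p ?R"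
    using assms by (intro kernels_cover_card) auto
  then have "kernels_cover (1 + card ?R) p ({x. f x = 0} \<union> ?R)"
    by (rule kernels_cover_Un[OF kernels_cover_kernel[OF f]])
  then have "kernels_cover (1 + card ?R) p X"
    by (rule kernels_cover_subset) auto
  moreover have "card ?R + card {x\<in>X. f x = 0} = card X"
  proof -
    have "X = ?R \<union> {x\<in>X. f x = 0}" by blast
    then show ?thesis
      using assms(1) card_Un_disjoint[of ?R "{x\<in>X. f x = 0}"] by fastforce
  qed
  ultimately show ?thesis
    using that dim by simp
qed

lemma kernels_cover_nonparallel_image:
  assumes "finite A" "p \<noteq> 0"
  obtains k where "kernels_cover k p (w ` {a\<in>A. \<not> parallel (w a) p})"
    "k + V.dim (w ` A) \<le> card {a\<in>A. \<not> parallel (w a) p} + 2"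
proof -
  let ?N = "{a\<in>A. \<not> parallel (w a) p}"
  have N: "finite (w ` ?N)" "\<forall>x\<in>w ` ?N. \<not> parallel x p"
    using assms(1) by auto
  obtain k where k: "kernels_cover k p (w ` ?N)" "k + V.dim (insert p (w ` ?N)) \<le> card (w ` ?N) + 2"
    by (rule kernels_cover_nonparallel[OF N(1) assms(2) N(2)])
  have "w ` ?N = {x\<in>w ` A. \<not> parallel x p}"
    by auto
  then have "V.dim (w ` A) \<le> V.dim (insert p (w ` ?N))"
    using assms(1) by (intro dim_le_dim_of_subset_span) (simp_all add: subset_span_insert_nonparallel)
  moreover have "card (w ` ?N) \<le> card ?N"
    using assms(1) by (intro card_image_le) simp
  ultimately show ?thesis
    using that[OF k(1)] k(2) by simp
qed

section \<open>Contracting sums of tensor powers\<close>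

lemma sym_tensor_Suc: "sym_tensor (Suc m) c x js = sym_tensor m c x js * x (js m)"
  unfolding sym_tensor_def by (simp add: prod.lessThan_Suc mult.assoc)

lemma sym_tensor_uminus: "sym_tensor m (- c) x = - sym_tensor m c x"
  by (simp add: sym_tensor_def fun_eq_iff)

lemma sym_tensor_nonzero:
  assumes "c \<noteq> 0" "x \<noteq> 0"
  shows "sym_tensor m c x \<noteq> 0"
proof
  obtain j where "x j \<noteq> 0"
    using assms(2) by (auto simp: fun_eq_iff)
  moreover assume "sym_tensor m c x = 0"
  then have "sym_tensor m c x (\<lambda>_. j) = 0"
    by simp
  ultimately show False
    using assms(1) by (simp add: sym_tensor_def)
qed

lemma sym_tensor_parallel_contract:
  assumes "parallel x p" "\<forall>k<m. lin_functional (fs k)"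
  shows "sym_tensor m c x js * (\<Prod>k<m. fs k p) = c * (\<Prod>k<m. fs k x) * sym_tensor m 1 p js"
proof -
  obtain t where t: "x = vscale t p"
    using assms(1) parallel_def by blast
  have "fs k x = t * fs k p" if "k < m" for k
    using assms(2) that module_hom.scale[of vscale "(*)" "fs k"] t by simp
  then have "(\<Prod>k<m. fs k x) = t ^ m * (\<Prod>k<m. fs k p)"
    by (simp add: prod.distrib)
  moreover have "sym_tensor m c x js = c * t ^ m * sym_tensor m 1 p js"
    by (simp add: sym_tensor_def t vscale_apply prod.distrib)
  ultimately show ?thesis
    by (simp add: mult_ac)
qed

lemma sum_sym_tensor_contract_last:
  fixes w :: "'k \<Rightarrow> 'i \<Rightarrow> 'f::field"
  assumes "(\<Sum>i\<in>I. sym_tensor (Suc m) (c i) (w i)) = 0" "lin_functional f"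
  shows "(\<Sum>i\<in>I. sym_tensor m (c i * f (w i)) (w i)) = 0"
proof
  fix js :: "nat \<Rightarrow> 'i"
  have unchanged: "sym_tensor m c x (js(m := j)) = sym_tensor m c x js" for c x j
    unfolding sym_tensor_def by (intro arg_cong[where f = "(*) c"] prod.cong) auto
  have slice: "(\<Sum>i\<in>I. vscale (sym_tensor m (c i) (w i) js) (w i)) = 0"
  proof
    fix j
    have "(\<Sum>i\<in>I. sym_tensor (Suc m) (c i) (w i)) (js(m := j)) = 0"
      by (simp add: assms(1))
    then show "(\<Sum>i\<in>I. vscale (sym_tensor m (c i) (w i) js) (w i)) j = 0 j"
      by (simp add: vscale_apply sum_apply sym_tensor_Suc unchanged mult.commute)
  qed
  have "(\<Sum>i\<in>I. sym_tensor m (c i * f (w i)) (w i) js)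
      = f (\<Sum>i\<in>I. vscale (sym_tensor m (c i) (w i) js) (w i))"
    by (simp add: module_hom.sum[OF assms(2)] module_hom.scale[OF assms(2)] sym_tensor_def mult_ac)
  also have "\<dots> = 0"
    by (simp add: slice module_hom.zero[OF assms(2)])
  finally show "(\<Sum>i\<in>I. sym_tensor m (c i * f (w i)) (w i)) js = 0 js"
    by (simp add: sum_apply)
qed

lemma sum_sym_tensor_contract:
  assumes "(\<Sum>i\<in>I. sym_tensor m (c i) (w i)) = 0" "\<forall>k<m. lin_functional (fs k)"
  shows "(\<Sum>i\<in>I. c i * (\<Prod>k<m. fs k (w i))) = 0"
  using assms
proof (induction m arbitrary: c)
  case 0
  then show ?case
    using fun_cong[OF "0.prems"(1)] by (simp add: sum_apply sym_tensor_def)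
next
  case (Suc m)
  have "lin_functional (fs m)"
    using Suc.prems(2) by simp
  then have "(\<Sum>i\<in>I. sym_tensor m (c i * fs m (w i)) (w i)) = 0"
    by (rule sum_sym_tensor_contract_last[OF Suc.prems(1)])
  then have "(\<Sum>i\<in>I. c i * fs m (w i) * (\<Prod>k<m. fs k (w i))) = 0"
    using Suc.prems(2) by (intro Suc.IH) simp_all
  then show ?case
    by (simp add: mult_ac)
qed

lemma sum_sym_tensor_contract_all_but_one:
  fixes w :: "'k \<Rightarrow> 'i \<Rightarrow> 'f::field"
  assumes "(\<Sum>i\<in>I. sym_tensor (Suc m) (c i) (w i)) = 0" "\<forall>k<m. lin_functional (fs k)"
  shows "(\<Sum>i\<in>I. vscale (c i * (\<Prod>k<m. fs k (w i))) (w i)) = 0"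
proof
  fix j :: 'i
  have "\<forall>k<Suc m. lin_functional ((fs(m := \<lambda>x. x j)) k)"
    using assms(2) lin_functional_coordinate by (simp add: less_Suc_eq)
  then have "(\<Sum>i\<in>I. c i * (\<Prod>k<Suc m. (fs(m := \<lambda>x. x j)) k (w i))) = 0"
    by (rule sum_sym_tensor_contract[OF assms(1)])
  moreover have "(\<Prod>k<m. (fs(m := \<lambda>x. x j)) k (w i)) = (\<Prod>k<m. fs k (w i))" for i
    by (rule prod.cong) auto
  ultimately show "(\<Sum>i\<in>I. vscale (c i * (\<Prod>k<m. fs k (w i))) (w i)) j = 0 j"
    by (simp add: vscale_apply sum_apply mult_ac)
qed

lemma sum_parallel_class_eq_0:
  fixes w :: "'k \<Rightarrow> 'i \<Rightarrow> 'f::field"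
  assumes "finite I" "(\<Sum>i\<in>I. sym_tensor m (c i) (w i)) = 0"
    and "kernels_cover m p (w ` {i\<in>I. \<not> parallel (w i) p})"
  shows "(\<Sum>i\<in>{i\<in>I. parallel (w i) p}. sym_tensor m (c i) (w i)) = 0"
proof -
  obtain fs where fs: "\<forall>k<m. lin_functional (fs k) \<and> fs k p \<noteq> 0"
    and kill: "\<forall>x\<in>w ` {i\<in>I. \<not> parallel (w i) p}. \<exists>k<m. fs k x = 0"
    using assms(3) kernels_cover_def by blast
  define P where "P x = (\<Prod>k<m. fs k x)" for x
  have "(\<Sum>i\<in>I. c i * P (w i)) = 0"
    unfolding P_def using fs by (intro sum_sym_tensor_contract[OF assms(2)]) simp
  moreover have "(\<Sum>i\<in>I. c i * P (w i)) = (\<Sum>i\<in>{i\<in>I. parallel (w i) p}. c i * P (w i))"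
    using kill by (intro sum.mono_neutral_right[OF assms(1)]) (auto simp: P_def)
  ultimately have class_sum: "(\<Sum>i\<in>{i\<in>I. parallel (w i) p}. c i * P (w i)) = 0"
    by simp
  have P_parallel: "sym_tensor m (c i) (w i) js * P p = c i * P (w i) * sym_tensor m 1 p js"
    if "parallel (w i) p" for i js
    unfolding P_def using fs by (intro sym_tensor_parallel_contract[OF that]) simp
  have "(\<Sum>i\<in>{i\<in>I. parallel (w i) p}. sym_tensor m (c i) (w i)) js * P p = 0" for js
  proof -
    have "(\<Sum>i\<in>{i\<in>I. parallel (w i) p}. sym_tensor m (c i) (w i)) js * P p
        = (\<Sum>i\<in>{i\<in>I. parallel (w i) p}. c i * P (w i)) * sym_tensor m 1 p js"
      by (simp add: sum_apply sum_distrib_right P_parallel)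
    then show ?thesis
      using class_sum by simp
  qed
  moreover have "P p \<noteq> 0"
    using fs by (simp add: P_def)
  ultimately show ?thesis
    by (auto simp: fun_eq_iff)
qed

lemma mem_span_of_kernels_cover:
  fixes w :: "'k \<Rightarrow> 'i \<Rightarrow> 'f::field"
  assumes "finite I" "(\<Sum>i\<in>I. sym_tensor (Suc m) (c i) (w i)) = 0"
    and "J \<subseteq> I" "a \<in> J" "c a \<noteq> 0" "kernels_cover m (w a) (w ` (J - {a}))"
  shows "w a \<in> V.span (w ` (I - J))"
proof -
  obtain fs where fs: "\<forall>k<m. lin_functional (fs k) \<and> fs k (w a) \<noteq> 0"
    and kill: "\<forall>x\<in>w ` (J - {a}). \<exists>k<m. fs k x = 0"
    using assms(6) kernels_cover_def by blast
  define t where "t i = c i * (\<Prod>k<m. fs k (w i))" for i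
  have "(\<Sum>i\<in>I. vscale (t i) (w i)) = 0"
    unfolding t_def using fs by (intro sum_sym_tensor_contract_all_but_one[OF assms(2)]) simp
  moreover have "(\<Sum>i\<in>I. vscale (t i) (w i)) = vscale (t a) (w a) + (\<Sum>i\<in>I - J. vscale (t i) (w i))"
  proof -
    have "(\<Sum>i\<in>I - {a}. vscale (t i) (w i)) = (\<Sum>i\<in>I - J. vscale (t i) (w i))"
      using assms(1,3,4) kill by (intro sum.mono_neutral_right) (auto simp: t_def)
    then show ?thesis
      using assms(1,3,4) by (simp add: sum.remove[of I a] subsetD)
  qed
  ultimately have "vscale (t a) (w a) = - (\<Sum>i\<in>I - J. vscale (t i) (w i))"
    by (simp add: eq_neg_iff_add_eq_0)
  moreover have "- (\<Sum>i\<in>I - J. vscale (t i) (w i)) \<in> V.span (w ` (I - J))"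
    by (intro V.span_neg V.span_sum V.span_scale V.span_base) auto
  moreover have "t a \<noteq> 0"
    using fs assms(5) by (simp add: t_def)
  then have "w a = vscale (inverse (t a)) (vscale (t a) (w a))"
    by simp
  ultimately show ?thesis
    using V.span_scale by metis
qed

lemma mem_span_complement_of_sum_sym_tensor_eq_0:
  fixes w :: "'k \<Rightarrow> 'i \<Rightarrow> 'f::field"
  assumes "finite I" "J \<subseteq> I" "(\<Sum>i\<in>I. sym_tensor m (c i) (w i)) = 0"
    and "\<forall>i\<in>J. w i \<noteq> 0 \<and> c i \<noteq> 0" "pairwise (\<lambda>i j. \<not> parallel (w i) (w j)) J"
    and "card J + 2 \<le> m + V.dim (w ` J)" "a \<in> J"
  shows "w a \<in> V.span (w ` (I - J))"
proof -
  have finJ: "finite J"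
    using assms(1,2) finite_subset by blast
  have others: "{j\<in>J. \<not> parallel (w j) (w a)} = J - {a}"
    using assms(5,7) parallel_refl unfolding pairwise_def by blast
  obtain k where k: "kernels_cover k (w a) (w ` (J - {a}))" "k + V.dim (w ` J) \<le> card (J - {a}) + 2"
    using kernels_cover_nonparallel_image[OF finJ, of "w a" w] assms(4,7) unfolding others by blast
  have "card (J - {a}) + 1 = card J"
    using card_Suc_Diff1[OF finJ assms(7)] by simp
  then have "k + 1 \<le> m"
    using k(2) assms(6) by linarith
  then obtain m' where m': "m = Suc m'" "k \<le> m'"
    by (metis Suc_eq_plus1 Suc_le_D Suc_le_mono)
  have cover: "kernels_cover m' (w a) (w ` (J - {a}))"
    using kernels_cover_mono[OF k(1) m'(2)] assms(4,7) by blast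
  have tensor: "(\<Sum>i\<in>I. sym_tensor (Suc m') (c i) (w i)) = 0"
    using assms(3) m'(1) by simp
  have "c a \<noteq> 0"
    using assms(4,7) by blast
  then show ?thesis
    by (rule mem_span_of_kernels_cover[OF assms(1) tensor assms(2,7) _ cover])
qed

lemma sum_parallel_class_eq_0_of_dim_bound:
  fixes w :: "'k \<Rightarrow> 'i \<Rightarrow> 'f::field"
  assumes "finite I" "J \<subseteq> I" "(\<Sum>i\<in>I. sym_tensor m (c i) (w i)) = 0"
    and "\<forall>i\<in>I. w i \<noteq> 0" "\<forall>i\<in>J. c i \<noteq> 0" "pairwise (\<lambda>i j. \<not> parallel (w i) (w j)) J"
    and "card I + 3 \<le> m + 2 * V.dim (w ` J)" "card J + 2 \<le> m + V.dim (w ` J)" "i0 \<in> I"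
  shows "(\<Sum>i\<in>{i\<in>I. parallel (w i) (w i0)}. sym_tensor m (c i) (w i)) = 0"
proof -
  let ?p = "w i0"
  define N1 where "N1 = {i\<in>J. \<not> parallel (w i) ?p}"
  define N2 where "N2 = {i\<in>I - J. \<not> parallel (w i) ?p}"
  have p: "?p \<noteq> 0"
    using assms(4,9) by blast
  have finJ: "finite J"
    using assms(1,2) finite_subset by blast
  obtain k1 where k1: "kernels_cover k1 ?p (w ` N1)" "k1 + V.dim (w ` J) \<le> card N1 + 2"
    unfolding N1_def by (rule kernels_cover_nonparallel_image[OF finJ p])
  obtain k2 where k2: "kernels_cover k2 ?p (w ` N2)" "k2 + V.dim (w ` (I - J)) \<le> card N2 + 2"
    unfolding N2_def using assms(1) by (rule kernels_cover_nonparallel_image[OF finite_Diff p])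
  have "w ` J \<subseteq> V.span (w ` (I - J))"
    using mem_span_complement_of_sum_sym_tensor_eq_0[OF assms(1-3) _ assms(6,8)] assms(2,4,5) by blast
  then have "V.dim (w ` J) \<le> V.dim (w ` (I - J))"
    using assms(1) by (intro dim_le_dim_of_subset_span) auto
  moreover have "card N1 + card N2 < card I"
    unfolding N1_def N2_def using parallel_refl by (intro card_filter_partition_less[OF assms(1,2,9)]) simp
  ultimately have "k1 + k2 \<le> m"
    using k1(2) k2(2) assms(7) by linarith
  then have "kernels_cover m ?p (w ` N1 \<union> w ` N2)"
    using kernels_cover_Un[OF k1(1) k2(1)] kernels_cover_mono p by blast
  moreover have "w ` {i\<in>I. \<not> parallel (w i) ?p} \<subseteq> w ` N1 \<union> w ` N2"
    unfolding N1_def N2_def by auto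
  ultimately show ?thesis
    using sum_parallel_class_eq_0[OF assms(1,3)] kernels_cover_subset by blast
qed

section \<open>Matching the terms of two decompositions\<close>

lemma bij_betw_the_elem:
  assumes "\<forall>a\<in>A. is_singleton (C a)" "disjoint_family_on C A"
  shows "bij_betw (\<lambda>a. the_elem (C a)) A (\<Union>a\<in>A. C a)"
proof (rule bij_betw_imageI)
  have C: "C a = {the_elem (C a)}" if "a \<in> A" for a
    using assms(1) that by (simp flip: is_singleton_the_elem)
  show "inj_on (\<lambda>a. the_elem (C a)) A"
  proof (rule inj_onI)
    fix a a' assume a: "a \<in> A" "a' \<in> A" and eq: "the_elem (C a) = the_elem (C a')"
    then have "C a \<inter> C a' \<noteq> {}"
      using C by (metis Int_absorb insert_not_empty)
    then show "a = a'"
      using assms(2) a unfolding disjoint_family_on_def by blast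
  qed
  show "(\<lambda>a. the_elem (C a)) ` A = (\<Union>a\<in>A. C a)"
    using C by auto
qed

lemma singletons_of_card_le:
  assumes "finite A" "finite B" "\<forall>a\<in>A. C a \<noteq> {} \<and> C a \<subseteq> B" "disjoint_family_on C A"
    and "card B \<le> card A"
  shows "(\<forall>a\<in>A. is_singleton (C a)) \<and> (\<Union>a\<in>A. C a) = B"
proof -
  have fin: "finite (C a)" if "a \<in> A" for a
    using assms(2,3) that finite_subset by blast
  have pos: "1 \<le> card (C a)" if "a \<in> A" for a
    using fin[OF that] assms(3) that by (simp add: Suc_le_eq card_gt_0_iff)
  have union: "card (\<Union>a\<in>A. C a) = (\<Sum>a\<in>A. card (C a))"
    using assms(1,4) fin by (intro card_UN_disjoint) (auto simp: disjoint_family_on_def)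
  have sub: "(\<Union>a\<in>A. C a) \<subseteq> B"
    using assms(3) by blast
  then have "card (\<Union>a\<in>A. C a) \<le> card B"
    by (rule card_mono[OF assms(2)])
  then have le: "(\<Sum>a\<in>A. card (C a)) \<le> (\<Sum>a\<in>A. 1)"
    using union assms(5) by simp
  have one: "card (C a) = 1" if "a \<in> A" for a
  proof (rule ccontr)
    assume "card (C a) \<noteq> 1"
    then have "1 < card (C a)"
      using pos[OF that] by linarith
    then have "(\<Sum>a\<in>A. 1) < (\<Sum>a\<in>A. card (C a))"
      using pos that by (intro sum_strict_mono_ex1[OF assms(1)]) auto
    then show False
      using le by linarith
  qed
  then have "card B \<le> card (\<Union>a\<in>A. C a)"
    using union assms(5) by simp
  then have "(\<Union>a\<in>A. C a) = B"
    using card_seteq[OF assms(2) sub] by blast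
  then show ?thesis
    using one by (simp add: is_singleton_altdef)
qed

lemma image_mset_mset_set_bij_betw:
  assumes "bij_betw \<sigma> A B" "\<forall>a\<in>A. f a = g (\<sigma> a)"
  shows "image_mset f (mset_set A) = image_mset g (mset_set B)"
proof -
  have "x \<in> A" if "x \<in># mset_set A" for x
    using that by (cases "finite A") auto
  then have "image_mset f (mset_set A) = image_mset g (image_mset \<sigma> (mset_set A))"
    using assms(2) by (simp add: multiset.map_comp cong: image_mset_cong)
  also have "image_mset \<sigma> (mset_set A) = mset_set B"
    using assms(1) by (simp add: bij_betw_def image_mset_mset_set)
  finally show ?thesis .
qed

lemma sum_parallel_class_Inl:
  fixes v :: "'a \<Rightarrow> 'i \<Rightarrow> 'f::field" and u :: "'b \<Rightarrow> 'i \<Rightarrow> 'f"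
  assumes "finite B" "a \<in> A" "pairwise (\<lambda>a a'. \<not> parallel (v a) (v a')) A"
  shows "(\<Sum>i\<in>{i\<in>A <+> B. parallel (case_sum v u i) (v a)}.
            sym_tensor m (case_sum \<alpha> (\<lambda>b. - \<beta> b) i) (case_sum v u i))
       = sym_tensor m (\<alpha> a) (v a) - (\<Sum>b\<in>{b\<in>B. parallel (u b) (v a)}. sym_tensor m (\<beta> b) (u b))"
proof -
  let ?S = "{b\<in>B. parallel (u b) (v a)}"
  let ?g = "\<lambda>i. sym_tensor m (case_sum \<alpha> (\<lambda>b. - \<beta> b) i) (case_sum v u i)"
  have "{i\<in>A <+> B. parallel (case_sum v u i) (v a)} = insert (Inl a) (Inr ` ?S)"
    using assms(2,3) parallel_refl unfolding pairwise_def by auto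
  moreover have "sum ?g (insert (Inl a) (Inr ` ?S)) = ?g (Inl a) + sum ?g (Inr ` ?S)"
    using assms(1) by (intro sum.insert) auto
  moreover have "sum ?g (Inr ` ?S) = (\<Sum>b\<in>?S. ?g (Inr b))"
    by (simp add: sum.reindex)
  ultimately show ?thesis
    by (simp add: sum_negf sym_tensor_uminus)
qed

lemma sum_parallel_class_Inr:
  fixes v :: "'a \<Rightarrow> 'i \<Rightarrow> 'f::field" and u :: "'b \<Rightarrow> 'i \<Rightarrow> 'f"
  assumes "b \<in> B" "pairwise (\<lambda>b b'. \<not> parallel (u b) (u b')) B" "\<forall>a\<in>A. \<not> parallel (v a) (u b)"
  shows "(\<Sum>i\<in>{i\<in>A <+> B. parallel (case_sum v u i) (u b)}.
            sym_tensor m (case_sum \<alpha> (\<lambda>b. - \<beta> b) i) (case_sum v u i))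
       = - sym_tensor m (\<beta> b) (u b)"
proof -
  have "{i\<in>A <+> B. parallel (case_sum v u i) (u b)} = {Inr b}"
  proof (intro equalityI subsetI)
    fix i assume i: "i \<in> {i\<in>A <+> B. parallel (case_sum v u i) (u b)}"
    show "i \<in> {Inr b}"
    proof (cases i)
      case (Inl a)
      then show ?thesis
        using i assms(3) by auto
    next
      case (Inr b')
      then have "b' \<in> B" "parallel (u b') (u b)"
        using i by auto
      then show ?thesis
        using assms(1,2) Inr unfolding pairwise_def by auto
    qed
  qed (use assms(1) parallel_refl in auto)
  then show ?thesis
    by (simp add: sym_tensor_uminus)
qed

lemma disjoint_family_on_parallel_partners:
  assumes "\<forall>b\<in>B. u b \<noteq> 0" "pairwise (\<lambda>a a'. \<not> parallel (v a) (v a')) A"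
  shows "disjoint_family_on (\<lambda>a. {b\<in>B. parallel (u b) (v a)}) A"
  unfolding disjoint_family_on_def
proof (intro ballI impI)
  fix a a' assume a: "a \<in> A" "a' \<in> A" "a \<noteq> a'"
  show "{b\<in>B. parallel (u b) (v a)} \<inter> {b\<in>B. parallel (u b) (v a')} = {}"
  proof (rule ccontr)
    assume "{b\<in>B. parallel (u b) (v a)} \<inter> {b\<in>B. parallel (u b) (v a')} \<noteq> {}"
    then obtain b where "b \<in> B" "parallel (u b) (v a)" "parallel (u b) (v a')"
      by blast
    then have "parallel (v a) (v a')"
      using parallel_sym parallel_trans assms(1) by blast
    then show False
      using assms(2) a unfolding pairwise_def by blast
  qed
qed

lemma is_singleton_parallel_partners:
  assumes "\<forall>b\<in>B. u b \<noteq> 0" "pairwise (\<lambda>b b'. \<not> parallel (u b) (u b')) B"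
    and "{b\<in>B. parallel (u b) x} \<noteq> {}"
  shows "is_singleton {b\<in>B. parallel (u b) x}"
proof (rule is_singletonI')
  fix b b' assume "b \<in> {b\<in>B. parallel (u b) x}" "b' \<in> {b\<in>B. parallel (u b) x}"
  then have "b \<in> B" "b' \<in> B" "parallel (u b) (u b')"
    using parallel_sym parallel_trans assms(1) by blast+
  then show "b = b'"
    using assms(2) unfolding pairwise_def by blast
qed (rule assms(3))

lemma exists_parallel_partner:
  fixes v :: "'a \<Rightarrow> 'i \<Rightarrow> 'f::field" and u :: "'b \<Rightarrow> 'i \<Rightarrow> 'f"
  assumes "b \<in> B" "\<forall>a\<in>A. v a \<noteq> 0" "\<forall>b\<in>B. u b \<noteq> 0 \<and> \<beta> b \<noteq> 0"
    and "pairwise (\<lambda>b b'. \<not> parallel (u b) (u b')) B"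
    and "(\<Sum>i\<in>{i\<in>A <+> B. parallel (case_sum v u i) (u b)}.
            sym_tensor m (case_sum \<alpha> (\<lambda>b. - \<beta> b) i) (case_sum v u i)) = 0"
  shows "\<exists>a\<in>A. parallel (u b) (v a)"
proof (rule ccontr)
  assume "\<not> (\<exists>a\<in>A. parallel (u b) (v a))"
  then have "\<forall>a\<in>A. \<not> parallel (v a) (u b)"
    using parallel_sym assms(2) by blast
  then have "- sym_tensor m (\<beta> b) (u b) = 0"
    using assms(5) sum_parallel_class_Inr[OF assms(1,4), where m = m and \<alpha> = \<alpha> and \<beta> = \<beta>] by simp
  moreover have "sym_tensor m (\<beta> b) (u b) \<noteq> 0"
    using assms(1,3) by (intro sym_tensor_nonzero) auto
  ultimately show False
    by simp
qed

lemma bij_betw_of_parallel_classes: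
  fixes v :: "'a \<Rightarrow> 'i \<Rightarrow> 'f::field" and u :: "'b \<Rightarrow> 'i \<Rightarrow> 'f"
  assumes "finite A" "finite B"
    and nz: "\<forall>a\<in>A. v a \<noteq> 0 \<and> \<alpha> a \<noteq> 0" "\<forall>b\<in>B. u b \<noteq> 0 \<and> \<beta> b \<noteq> 0"
    and vpar: "pairwise (\<lambda>a a'. \<not> parallel (v a) (v a')) A"
    and classes: "\<forall>i0\<in>A <+> B. (\<Sum>i\<in>{i\<in>A <+> B. parallel (case_sum v u i) (case_sum v u i0)}.
                    sym_tensor m (case_sum \<alpha> (\<lambda>b. - \<beta> b) i) (case_sum v u i)) = 0"
    and "card B \<le> card A \<or> pairwise (\<lambda>b b'. \<not> parallel (u b) (u b')) B"
  obtains \<sigma> where "bij_betw \<sigma> A B" "\<forall>a\<in>A. sym_tensor m (\<alpha> a) (v a) = sym_tensor m (\<beta> (\<sigma> a)) (u (\<sigma> a))"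
proof -
  define C where "C a = {b\<in>B. parallel (u b) (v a)}" for a
  have class_v: "sym_tensor m (\<alpha> a) (v a) = (\<Sum>b\<in>C a. sym_tensor m (\<beta> b) (u b))" if a: "a \<in> A" for a
    using classes sum_parallel_class_Inl[OF assms(2) a vpar, where u = u and m = m and \<alpha> = \<alpha> and \<beta> = \<beta>] a
    unfolding C_def by force
  have nonempty: "C a \<noteq> {}" if "a \<in> A" for a
    using class_v[OF that] sym_tensor_nonzero nz that by force
  have v: "\<forall>a\<in>A. v a \<noteq> 0" and u: "\<forall>b\<in>B. u b \<noteq> 0"
    using nz by auto
  have disjoint: "disjoint_family_on C A"
    unfolding C_def by (rule disjoint_family_on_parallel_partners[OF u vpar])
  have singletons: "(\<forall>a\<in>A. is_singleton (C a)) \<and> (\<Union>a\<in>A. C a) = B"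
    using assms(7)
  proof
    assume "card B \<le> card A"
    then show ?thesis
      using singletons_of_card_le[OF assms(1,2) _ disjoint] nonempty unfolding C_def by blast
  next
    assume upar: "pairwise (\<lambda>b b'. \<not> parallel (u b) (u b')) B"
    have "\<exists>a\<in>A. parallel (u b) (v a)" if b: "b \<in> B" for b
      using exists_parallel_partner[OF b v nz(2) upar bspec[OF classes InrI[OF b], simplified]] .
    then have "B \<subseteq> (\<Union>a\<in>A. C a)"
      unfolding C_def by blast
    moreover have "is_singleton (C a)" if "a \<in> A" for a
      using nonempty[OF that] unfolding C_def by (rule is_singleton_parallel_partners[OF u upar])
    ultimately show ?thesis
      unfolding C_def by blast
  qed
  have "bij_betw (\<lambda>a. the_elem (C a)) A B"
    using bij_betw_the_elem[OF conjunct1[OF singletons] disjoint] conjunct2[OF singletons] by simp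
  moreover have "sym_tensor m (\<alpha> a) (v a) = sym_tensor m (\<beta> (the_elem (C a))) (u (the_elem (C a)))"
    if a: "a \<in> A" for a
  proof -
    have "is_singleton (C a)"
      using singletons a by blast
    then obtain b where "C a = {b}"
      by (rule is_singletonE)
    then show ?thesis
      using class_v[OF a] by simp
  qed
  ultimately show ?thesis
    using that by blast
qed

section \<open>Kruskal rank\<close>

lemma lin_indep_fam_subset:
  assumes "lin_indep_fam u S" "T \<subseteq> S" "finite S"
  shows "lin_indep_fam u T"
  unfolding lin_indep_fam_def
proof (intro allI impI ballI)
  fix c a assume zero: "(\<Sum>a\<in>T. vscale (c a) (u a)) = 0" and a: "a \<in> T"
  define c' where "c' x = (if x \<in> T then c x else 0)" for x
  have "(\<Sum>x\<in>S. vscale (c' x) (u x)) = (\<Sum>x\<in>T. vscale (c x) (u x))"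
    using assms(2,3) by (intro sum.mono_neutral_cong_right) (auto simp: c'_def)
  then have "\<forall>x\<in>S. c' x = 0"
    using assms(1) zero unfolding lin_indep_fam_def by metis
  then have "c' a = 0"
    using a assms(2) by blast
  then show "c a = 0"
    using a by (simp add: c'_def)
qed

lemma lin_indep_fam_of_card_le_krank:
  assumes "S \<subseteq> {1..r}" "card S \<le> krank u r"
  shows "lin_indep_fam u S"
proof -
  define P where "P k \<longleftrightarrow> k \<le> r \<and> (\<forall>S. S \<subseteq> {1..r} \<and> card S = k \<longrightarrow> lin_indep_fam u S)" for k
  have "P 0"
    unfolding P_def lin_indep_fam_def using finite_subset by fastforce
  then have "P (krank u r)"
    unfolding krank_def P_def[symmetric] by (rule GreatestI_nat[where b = r]) (simp add: P_def)
  moreover obtain T where "S \<subseteq> T" "T \<subseteq> {1..r}" "card T = krank u r"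
    using exists_subset_between[OF assms(2) _ assms(1)] \<open>P (krank u r)\<close> by (auto simp: P_def)
  ultimately show ?thesis
    using lin_indep_fam_subset finite_subset[of T "{1..r}"] unfolding P_def by blast
qed

lemma krank_ge_1:
  assumes "1 \<le> r" "\<forall>a\<in>{1..r}. u a \<noteq> 0"
  shows "1 \<le> krank u r"
  unfolding krank_def
proof (rule Greatest_le_nat)
  show "1 \<le> r \<and> (\<forall>S. S \<subseteq> {1..r} \<and> card S = 1 \<longrightarrow> lin_indep_fam u S)"
  proof (intro conjI allI impI)
    fix S assume S: "S \<subseteq> {1..r} \<and> card S = 1"
    then obtain a where a: "S = {a}" "u a \<noteq> 0"
      using assms(2) by (metis card_1_singletonE insert_subset)
    then obtain j where "u a j \<noteq> 0"
      by (auto simp: fun_eq_iff)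
    then show "lin_indep_fam u S"
      unfolding lin_indep_fam_def a by (auto simp: fun_eq_iff vscale_apply)
  qed (rule assms(1))
qed (rule conjunct1)

lemma pairwise_not_parallel_of_krank:
  assumes "krank u r \<noteq> 1" "\<forall>a\<in>{1..r}. u a \<noteq> 0"
  shows "pairwise (\<lambda>a b. \<not> parallel (u a) (u b)) {1..r}"
  unfolding pairwise_def
proof (intro ballI impI)
  fix a b assume ab: "a \<in> {1..r}" "b \<in> {1..r}" "a \<noteq> b"
  then have "2 \<le> krank u r"
    using krank_ge_1[OF _ assms(2)] assms(1) by fastforce
  then have indep: "lin_indep_fam u {a, b}"
    using ab by (intro lin_indep_fam_of_card_le_krank) auto
  show "\<not> parallel (u a) (u b)"
  proof
    assume "parallel (u a) (u b)"
    then obtain t where t: "u a = vscale t (u b)"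
      unfolding parallel_def by blast
    have "(\<Sum>x\<in>{a, b}. vscale ((\<lambda>x. if x = a then 1 else - t) x) (u x)) = 0"
      using ab(3) by (simp add: t fun_eq_iff vscale_apply)
    then show False
      using indep unfolding lin_indep_fam_def by fastforce
  qed
qed

section \<open>Uniqueness of the decomposition\<close>

lemma sum_sym_tensor_Plus_eq_0:
  assumes "tensor_sum m n \<alpha> v = tensor_sum m r \<beta> u"
  shows "(\<Sum>i\<in>{1..n} <+> {1..r}. sym_tensor m (case_sum \<alpha> (\<lambda>b. - \<beta> b) i) (case_sum v u i)) = 0"
  using assms by (simp add: tensor_sum_def sum.Plus comp_def sym_tensor_uminus sum_negf)

lemma unique_decomposition_of_dim_bound:
  fixes v u :: "nat \<Rightarrow> 'i \<Rightarrow> 'f::field"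
  assumes "\<forall>a\<in>{1..n}. v a \<noteq> 0 \<and> \<alpha> a \<noteq> 0" "krank v n \<ge> 2"
    and "\<forall>b\<in>{1..r}. u b \<noteq> 0 \<and> \<beta> b \<noteq> 0" "r \<le> n \<or> krank u r \<noteq> 1"
    and "tensor_sum m n \<alpha> v = tensor_sum m r \<beta> u"
    and "2 * n + 3 \<le> m + 2 * V.dim (v ` {1..n})" "n + r + 3 \<le> m + 2 * V.dim (v ` {1..n})"
  shows "r = n \<and> term_mset m n \<alpha> v = term_mset m r \<beta> u"
proof -
  let ?I = "{1..n} <+> {1..r}" and ?J = "Inl ` {1..n}"
  let ?w = "case_sum v u" and ?c = "case_sum \<alpha> (\<lambda>b. - \<beta> b)"
  have tensor: "(\<Sum>i\<in>?I. sym_tensor m (?c i) (?w i)) = 0"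
    by (rule sum_sym_tensor_Plus_eq_0[OF assms(5)])
  have vpar: "pairwise (\<lambda>a a'. \<not> parallel (v a) (v a')) {1..n}"
    using assms(1,2) by (intro pairwise_not_parallel_of_krank) auto
  have upar: "card {1..r} \<le> card {1..n} \<or> pairwise (\<lambda>b b'. \<not> parallel (u b) (u b')) {1..r}"
    using assms(3,4) pairwise_not_parallel_of_krank by auto
  have dims: "?w ` ?J = v ` {1..n}" "card ?I = n + r" "card ?J = n"
    by (force, simp_all add: card_Plus card_image)
  have "V.dim (v ` {1..n}) \<le> n"
    using V.dim_le_card'[of "v ` {1..n}"] card_image_le[of "{1..n}" v] by simp
  then have bounds: "card ?I + 3 \<le> m + 2 * V.dim (?w ` ?J)" "card ?J + 2 \<le> m + V.dim (?w ` ?J)"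
    using assms(6,7) unfolding dims by linarith+
  have nonzero: "\<forall>i\<in>?I. ?w i \<noteq> 0" "\<forall>i\<in>?J. ?c i \<noteq> 0"
    using assms(1,3) by auto
  have wpar: "pairwise (\<lambda>i j. \<not> parallel (?w i) (?w j)) ?J"
    using vpar unfolding pairwise_def by auto
  have classes: "\<forall>i0\<in>?I. (\<Sum>i\<in>{i\<in>?I. parallel (?w i) (?w i0)}. sym_tensor m (?c i) (?w i)) = 0"
    by (intro ballI sum_parallel_class_eq_0_of_dim_bound[OF _ _ tensor nonzero wpar bounds]) auto
  obtain \<sigma> where \<sigma>: "bij_betw \<sigma> {1..n} {1..r}"
    and terms: "\<forall>a\<in>{1..n}. sym_tensor m (\<alpha> a) (v a) = sym_tensor m (\<beta> (\<sigma> a)) (u (\<sigma> a))"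
    by (rule bij_betw_of_parallel_classes[OF _ _ assms(1,3) vpar classes upar]) simp_all
  show ?thesis
    using bij_betw_same_card[OF \<sigma>] image_mset_mset_set_bij_betw[OF \<sigma> terms]
    by (simp add: term_mset_def)
qed

theorem corollary9p2:
  fixes W :: "('i \<Rightarrow> 'f::field) set"
    and m n :: nat
    and v :: "nat \<Rightarrow> ('i \<Rightarrow> 'f)"
    and \<alpha> :: "nat \<Rightarrow> 'f"
  assumes "n \<ge> 2" and "m \<ge> 2"
    and "CHAR('f) = 0 \<or> CHAR('f) > m"
    and "module.subspace vscale W"
    and "\<forall>a\<in>{1..n}. v a \<in> W \<and> v a \<noteq> 0"
    and "krank v n \<ge> 2"
    and "\<forall>a\<in>{1..n}. \<alpha> a \<noteq> 0"
  defines "d \<equiv> vector_space.dim vscale (v ` {1..n})"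
  shows "(2 * n + 1 \<le> m + 2 * d - 2 \<longrightarrow> unique_waring_decomp W m n \<alpha> v)
       \<and> (\<forall>r::nat. r \<ge> n \<and> n + r + 1 \<le> m + 2 * d - 2 \<longrightarrow> unique_sym_decomp W m n \<alpha> v r)"
proof -
  (* Neither n \<ge> 2 nor the subspace W plays a role. *)
  have v: "\<forall>a\<in>{1..n}. v a \<noteq> 0 \<and> \<alpha> a \<noteq> 0"
    using assms(5,7) by blast
  show ?thesis
    unfolding unique_waring_decomp_def unique_sym_decomp_def
  proof (rule conjI; intro impI allI; elim conjE)
    fix r' u \<beta>
    assume "2 * n + 1 \<le> m + 2 * d - 2" "r' \<le> n" "\<forall>b\<in>{1..r'}. u b \<in> W \<and> u b \<noteq> 0 \<and> \<beta> b \<noteq> 0"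
      and "tensor_sum m n \<alpha> v = tensor_sum m r' \<beta> u"
    then show "r' = n \<and> term_mset m n \<alpha> v = term_mset m r' \<beta> u"
      using v assms(2,6) unfolding d_def by (intro unique_decomposition_of_dim_bound) auto
  next
    fix r r' u \<beta>
    assume "n \<le> r" "n + r + 1 \<le> m + 2 * d - 2" "r' \<le> r" "\<forall>b\<in>{1..r'}. u b \<in> W \<and> u b \<noteq> 0 \<and> \<beta> b \<noteq> 0"
      and "tensor_sum m n \<alpha> v = tensor_sum m r' \<beta> u"
    then have "krank u r' \<noteq> 1 \<Longrightarrow> r' = n \<and> term_mset m n \<alpha> v = term_mset m r' \<beta> u"
      using v assms(2,6) unfolding d_def by (intro unique_decomposition_of_dim_bound) auto
    then show "krank u r' = 1 \<or> r' = n \<and> term_mset m n \<alpha> v = term_mset m r' \<beta> u"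
      by blast
  qed
qed

end
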